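(* Let $b,\sigma:\mathbb{R}^2\to\mathbb{R}$ be locally Lipschitz with $\sigma(x)\neq0$ for all $x$, and let $I^T_x$ and $\mathbb V$ be as in the context. Then: (i) for any $x,y\in\mathbb{R}^2$ and $T>0$ there exists $\psi\in C([0,T];\mathbb{R}^2)$ with $\psi(0)=x$, $\psi(T)=y$ and $I^T_x(\psi)<\infty$; consequently $\mathbb V(x,y)<\infty$ for all $x,y$; (ii) $\mathbb V$ is upper semicontinuous on $\mathbb{R}^2\times\mathbb{R}^2$: for every $(x,y)$, $\lim_{\delta\searrow0}\sup_{(\tilde x,\tilde y)\in B_\delta((x,y))\setminus\{(x,y)\}}\mathbb V(\tilde x,\tilde y)\le\mathbb V(x,y)$; in particular, if $e=(e_1,0)$ is an equilibrium of the deterministic system $\dot y_1=y_2$, $\dot y_2=b(y_1,y_2)$ (i.e. $b(e_1,0)=0$), then $\mathbb V$ is continuous at $(e,e)$; (iii) given $x_0,y_0\in\mathbb{R}^2$ and $\delta,\eta>0$ such that $\mathbb V(x,y_0)<\eta$ for all $x\in\overline B_\delta(x_0)$, there is $T_0\in(0,\infty)$ such that for every $x\in\overline B_\delta(x_0)$ there are $T^x\in(0,T_0]$ and $\psi^x\in C([0,T^x];\mathbb{R}^2)$ with $\psi^x(0)=x$, $\psi^x(T^x)=y_0$ and $I^{T^x}_x(\psi^x)<\eta$.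
   Context: This concerns the stochastic second-order equation $\ddot X_\varepsilon=b(X_\varepsilon,\dot X_\varepsilon)+\sqrt\varepsilon\sigma(X_\varepsilon,\dot X_\varepsilon)\dot B$, i.e. the system $dY^1=Y^2dt$, $dY^2=b(Y^1,Y^2)dt+\sqrt\varepsilon\sigma(Y^1,Y^2)dB$ with scalar Brownian motion $B$. For $x\in\mathbb{R}^2$, $T>0$, and $\psi\in C([0,T];\mathbb{R}^2)$ define $I^T_x(\psi)=\frac12\int_0^T\Big|\frac{\varphi''(s)-b(\varphi(s),\varphi'(s))}{\sigma(\varphi(s),\varphi'(s))}\Big|^2ds$ if $\psi=(\varphi,\varphi')$ with $\varphi\in C^1$, $\varphi'$ absolutely continuous and $\psi(0)=x$, and $I^T_x(\psi)=+\infty$ otherwise. The quasipotential is $\mathbb V(x,y)=\inf\{I^T_x(\psi):\psi(0)=x,\psi(T)=y,T>0\}$. $B_\delta(z)$ is the open ball, $\overline B_\delta(z)$ the closed ball. *)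

theory Defs
  imports "HOL-Analysis.Analysis"
begin

type_synonym R2 = "real \<times> real"

definition loc_lipschitz :: "('a::metric_space \<Rightarrow> 'b::metric_space) \<Rightarrow> bool" where
  "loc_lipschitz f \<longleftrightarrow> (\<forall>z. \<exists>r>0. \<exists>L. L-lipschitz_on (cball z r) f)"

definition abs_cont_on :: "(real \<Rightarrow> real) \<Rightarrow> real set \<Rightarrow> bool" where
  "abs_cont_on f S \<longleftrightarrow>
     (\<forall>\<epsilon>>0. \<exists>\<delta>>0. \<forall>(n::nat) (a::nat \<Rightarrow> real) (b::nat \<Rightarrow> real).
        (\<forall>i<n. a i \<in> S \<and> b i \<in> S \<and> a i \<le> b i \<and> {a i..b i} \<subseteq> S) \<longrightarrow>
        (\<forall>i<n. \<forall>j<n. i \<noteq> j \<longrightarrow> b i \<le> a j \<or> b j \<le> a i) \<longrightarrow>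
        (\<Sum>i<n. b i - a i) < \<delta> \<longrightarrow> (\<Sum>i<n. \<bar>f (b i) - f (a i)\<bar>) < \<epsilon>)"

definition admissible :: "real \<Rightarrow> R2 \<Rightarrow> (real \<Rightarrow> R2) \<Rightarrow> bool" where
  "admissible T x \<psi> \<longleftrightarrow>
     \<psi> 0 = x \<and>
     (\<forall>t\<in>{0..T}. ((\<lambda>s. fst (\<psi> s)) has_real_derivative snd (\<psi> t)) (at t within {0..T})) \<and>
     continuous_on {0..T} (\<lambda>s. snd (\<psi> s)) \<and>
     abs_cont_on (\<lambda>s. snd (\<psi> s)) {0..T}"

text \<open>The action functional I^T_x(\<psi>) (value in [0,\<infinity>]); \<phi>'' is the (a.e. existing) derivative
  of \<phi>' = snd \<circ> \<psi>.\<close>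
definition action :: "(R2 \<Rightarrow> real) \<Rightarrow> (R2 \<Rightarrow> real) \<Rightarrow> real \<Rightarrow> R2 \<Rightarrow> (real \<Rightarrow> R2) \<Rightarrow> ennreal" where
  "action b \<sigma> T x \<psi> =
     (if admissible T x \<psi> then
        (1/2) * (\<integral>\<^sup>+ t\<in>{0..T}. ennreal
           ((\<bar>(deriv (\<lambda>s. snd (\<psi> s)) t - b (\<psi> t)) / \<sigma> (\<psi> t)\<bar>)\<^sup>2) \<partial>lebesgue)
      else \<infinity>)"

definition quasipot :: "(R2 \<Rightarrow> real) \<Rightarrow> (R2 \<Rightarrow> real) \<Rightarrow> R2 \<Rightarrow> R2 \<Rightarrow> ennreal" where
  "quasipot b \<sigma> x y =
     (INF (T, \<psi>) \<in> {(T, \<psi>). T > 0 \<and> continuous_on {0..T} \<psi> \<and> \<psi> 0 = x \<and> \<psi> T = y}.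
        action b \<sigma> T x \<psi>)"

end

theory Submission
  imports Defs
begin

text \<open>Between any two states, the cubic whose position and velocity interpolate the endpoint
  data gives an admissible path of finite action in any prescribed time. Conversely, a path
  \<psi> of action below c can be moved to nearby endpoints by adding the Hermite cubic of the
  (small) endpoint displacements: near the compact trace of \<psi> the coefficients b, \<sigma> are
  uniformly continuous and \<sigma> is bounded away from 0, so the integrand grows at most by a factor
  1 + \<gamma> plus \<gamma>, and the action stays below c. Hence the strict sublevel sets of the
  quasipotential are open, i.e. it is upper semicontinuous, which yields the bound on the
  punctured-ball suprema and, since it vanishes at (e, e) for an equilibrium e, continuity
  there. The same perturbation serves a whole neighbourhood of each starting point with one
  transit time, and compactness of the ball reduces to finitely many times.\<close>

section \<open>Nonnegative integrals\<close>

lemma ennreal_half_mult: "1/2 * ennreal a = ennreal (a/2)"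
proof -
  have h: "(1/2::ennreal) = ennreal (1/2)" using divide_ennreal[of 1 2] by simp
  show ?thesis
    unfolding h using ennreal_mult'[of "1/2" a] by simp
qed

lemma nn_integral_indicator_Icc_less_top:
  fixes h :: "real \<Rightarrow> real"
  assumes "continuous_on {a..b} h"
  shows "(\<integral>\<^sup>+t. ennreal (h t) * indicator {a..b} t \<partial>lebesgue) < \<infinity>"
proof -
  obtain B where "\<forall>y\<in>h ` {a..b}. norm y \<le> B"
    using compact_imp_bounded[OF compact_continuous_image[OF assms compact_Icc]]
    by (auto simp: bounded_iff)
  then have B: "h t \<le> B" if "t \<in> {a..b}" for t
    using that by force
  have "(\<integral>\<^sup>+t. ennreal (h t) * indicator {a..b} t \<partial>lebesgue)
      \<le> (\<integral>\<^sup>+t. ennreal B * indicator {a..b} t \<partial>lebesgue)"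
    by (rule nn_integral_mono) (auto simp: indicator_def intro!: ennreal_leI B)
  also have "\<dots> < \<infinity>"
    by (simp add: nn_integral_cmult_indicator emeasure_lborel_Icc_eq ennreal_mult_less_top)
  finally show ?thesis .
qed

text \<open>The two estimates below avoid any measurability assumption on the integrand, which
  in our application involves the derivative of an absolutely continuous function.\<close>

lemma nn_integral_le_add:
  assumes le: "\<And>x. f x \<le> g x + h x"
    and h: "h \<in> borel_measurable M" "\<And>x. h x < top"
  shows "integral\<^sup>N M f \<le> integral\<^sup>N M g + integral\<^sup>N M h"
  unfolding nn_integral_def[of M f]
proof (rule SUP_least, safe)
  fix s assume s: "simple_function M s" "s \<le> f"
  have sm: "s \<in> borel_measurable M" using s(1) by (rule borel_measurable_simple_function)
  have "integral\<^sup>S M s = integral\<^sup>N M s" using s(1) by (simp add: nn_integral_eq_simple_integral)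
  also have "\<dots> \<le> (\<integral>\<^sup>+x. (s x - h x) + h x \<partial>M)"
    by (rule nn_integral_mono) (metis add.commute le_iff_add add_diff_self_ennreal le_cases
        diff_le_self_ennreal)
  also have "\<dots> = (\<integral>\<^sup>+x. (s x - h x) \<partial>M) + integral\<^sup>N M h"
    using sm h(1) by (simp add: nn_integral_add)
  also have "(\<integral>\<^sup>+x. (s x - h x) \<partial>M) \<le> integral\<^sup>N M g"
  proof (rule nn_integral_mono)
    fix x have "s x \<le> g x + h x" using s(2) le[of x] by (meson le_funD order_trans)
    then show "s x - h x \<le> g x" using h(2)[of x] by (auto simp add: ennreal_minus_le_iff add.commute)
  qed
  finally show "integral\<^sup>S M s \<le> integral\<^sup>N M g + integral\<^sup>N M h" by (simp add: add_right_mono)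
qed

lemma nn_integral_cmult_le:
  fixes a :: real
  assumes a: "a > 0"
  shows "(\<integral>\<^sup>+x. ennreal a * g x \<partial>M) \<le> ennreal a * integral\<^sup>N M g"
  unfolding nn_integral_def[of M "\<lambda>x. ennreal a * g x"]
proof (rule SUP_least, safe)
  fix s assume s: "simple_function M s" "s \<le> (\<lambda>x. ennreal a * g x)"
  have sm: "s \<in> borel_measurable M" using s(1) by (rule borel_measurable_simple_function)
  have inv: "ennreal a * ennreal (1/a) = 1" using a by (simp flip: ennreal_mult)
  have "integral\<^sup>S M s = (\<integral>\<^sup>+x. ennreal a * (ennreal (1/a) * s x) \<partial>M)"
    using s(1) by (simp add: nn_integral_eq_simple_integral mult.assoc[symmetric] inv)
  also have "\<dots> = ennreal a * (\<integral>\<^sup>+x. ennreal (1/a) * s x \<partial>M)"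
    using sm by (simp add: nn_integral_cmult)
  also have "(\<integral>\<^sup>+x. ennreal (1/a) * s x \<partial>M) \<le> integral\<^sup>N M g"
  proof (rule nn_integral_mono)
    fix x
    have "ennreal (1/a) * s x \<le> ennreal (1/a) * (ennreal a * g x)"
      using s(2) by (intro mult_left_mono) (auto dest: le_funD)
    also have "\<dots> = g x" by (simp add: mult.assoc[symmetric] inv mult.commute[of "ennreal (1/a)"])
    finally show "ennreal (1/a) * s x \<le> g x" .
  qed
  finally show "integral\<^sup>S M s \<le> ennreal a * integral\<^sup>N M g" by (simp add: mult_left_mono)
qed

section \<open>Absolute continuity\<close>

definition nonoverlapping_intervals :: "real set \<Rightarrow> nat \<Rightarrow> (nat \<Rightarrow> real) \<Rightarrow> (nat \<Rightarrow> real) \<Rightarrow> bool"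
  where "nonoverlapping_intervals S n a b \<longleftrightarrow>
    (\<forall>i<n. a i \<in> S \<and> b i \<in> S \<and> a i \<le> b i \<and> {a i..b i} \<subseteq> S) \<and>
    (\<forall>i<n. \<forall>j<n. i \<noteq> j \<longrightarrow> b i \<le> a j \<or> b j \<le> a i)"

lemma abs_cont_on_iff:
  "abs_cont_on f S \<longleftrightarrow> (\<forall>\<epsilon>>0. \<exists>\<delta>>0. \<forall>n a b. nonoverlapping_intervals S n a b \<longrightarrow>
     (\<Sum>i<n. b i - a i) < \<delta> \<longrightarrow> (\<Sum>i<n. \<bar>f (b i) - f (a i)\<bar>) < \<epsilon>)"
  unfolding abs_cont_on_def nonoverlapping_intervals_def by (simp add: imp_conjL)

lemma abs_cont_on_add:
  assumes "abs_cont_on f S" "abs_cont_on g S"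
  shows "abs_cont_on (\<lambda>s. f s + g s) S"
  unfolding abs_cont_on_iff
proof (intro allI impI)
  fix \<epsilon> :: real assume "\<epsilon> > 0"
  obtain \<delta>f where "\<delta>f > 0" and \<delta>f: "\<forall>n a b. nonoverlapping_intervals S n a b \<longrightarrow>
      (\<Sum>i<n. b i - a i) < \<delta>f \<longrightarrow> (\<Sum>i<n. \<bar>f (b i) - f (a i)\<bar>) < \<epsilon>/2"
    using assms(1)[unfolded abs_cont_on_iff, rule_format, of "\<epsilon>/2"] \<open>\<epsilon> > 0\<close> by auto
  obtain \<delta>g where "\<delta>g > 0" and \<delta>g: "\<forall>n a b. nonoverlapping_intervals S n a b \<longrightarrow>
      (\<Sum>i<n. b i - a i) < \<delta>g \<longrightarrow> (\<Sum>i<n. \<bar>g (b i) - g (a i)\<bar>) < \<epsilon>/2"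
    using assms(2)[unfolded abs_cont_on_iff, rule_format, of "\<epsilon>/2"] \<open>\<epsilon> > 0\<close> by auto
  show "\<exists>\<delta>>0. \<forall>n a b. nonoverlapping_intervals S n a b \<longrightarrow> (\<Sum>i<n. b i - a i) < \<delta> \<longrightarrow>
      (\<Sum>i<n. \<bar>f (b i) + g (b i) - (f (a i) + g (a i))\<bar>) < \<epsilon>"
  proof (intro exI[of _ "min \<delta>f \<delta>g"] conjI allI impI)
    fix n a b
    assume "nonoverlapping_intervals S n a b" "(\<Sum>i<n. b i - a i) < min \<delta>f \<delta>g"
    then have "(\<Sum>i<n. \<bar>f (b i) - f (a i)\<bar>) + (\<Sum>i<n. \<bar>g (b i) - g (a i)\<bar>) < \<epsilon>"
      using \<delta>f[rule_format, of n a b] \<delta>g[rule_format, of n a b] by simp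
    moreover have "(\<Sum>i<n. \<bar>f (b i) + g (b i) - (f (a i) + g (a i))\<bar>)
        \<le> (\<Sum>i<n. \<bar>f (b i) - f (a i)\<bar>) + (\<Sum>i<n. \<bar>g (b i) - g (a i)\<bar>)"
      unfolding sum.distrib[symmetric] by (rule sum_mono) linarith
    ultimately show "(\<Sum>i<n. \<bar>f (b i) + g (b i) - (f (a i) + g (a i))\<bar>) < \<epsilon>" by linarith
  qed (use \<open>\<delta>f > 0\<close> \<open>\<delta>g > 0\<close> in simp)
qed

lemma lipschitz_on_imp_abs_cont_on:
  assumes "L-lipschitz_on S f"
  shows "abs_cont_on f S"
  unfolding abs_cont_on_iff
proof (intro allI impI)
  fix \<epsilon> :: real assume \<epsilon>: "\<epsilon> > 0"
  have L: "L \<ge> 0" using assms by (rule lipschitz_on_nonneg)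
  show "\<exists>\<delta>>0. \<forall>n a b. nonoverlapping_intervals S n a b \<longrightarrow> (\<Sum>i<n. b i - a i) < \<delta> \<longrightarrow>
      (\<Sum>i<n. \<bar>f (b i) - f (a i)\<bar>) < \<epsilon>"
  proof (intro exI[of _ "\<epsilon>/(L+1)"] conjI allI impI)
    fix n a b
    assume ab: "nonoverlapping_intervals S n a b" and short: "(\<Sum>i<n. b i - a i) < \<epsilon>/(L+1)"
    have "(\<Sum>i<n. \<bar>f (b i) - f (a i)\<bar>) \<le> (\<Sum>i<n. L * (b i - a i))"
    proof (rule sum_mono)
      fix i assume "i \<in> {..<n}"
      then have "a i \<in> S" "b i \<in> S" "a i \<le> b i" using ab by (auto simp: nonoverlapping_intervals_def)
      then show "\<bar>f (b i) - f (a i)\<bar> \<le> L * (b i - a i)"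
        using lipschitz_onD[OF assms] by (fastforce simp: dist_real_def)
    qed
    also have "\<dots> \<le> L * (\<epsilon>/(L+1))"
      unfolding sum_distrib_left[symmetric] using short L by (intro mult_left_mono) auto
    also have "\<dots> < \<epsilon>" using L \<epsilon> by (simp add: field_simps)
    finally show "(\<Sum>i<n. \<bar>f (b i) - f (a i)\<bar>) < \<epsilon>" .
  qed (use \<epsilon> L in simp)
qed

section \<open>Uniform estimates near compact sets\<close>

lemma uniformly_small_near_zero:
  fixes f :: "'a::{real_normed_vector, heine_borel} \<times> 'b::metric_space \<Rightarrow> real"
  assumes f: "continuous_on UNIV f" and S: "compact S" and zero: "\<And>t. t \<in> S \<Longrightarrow> f (0, t) = 0"
    and \<epsilon>: "\<epsilon> > 0"
  obtains r where "r > 0" "\<And>u t. norm u < r \<Longrightarrow> t \<in> S \<Longrightarrow> \<bar>f (u, t)\<bar> < \<epsilon>"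
proof -
  define K where "K = cball (0::'a) 1 \<times> S"
  have "uniformly_continuous_on K f"
    using S unfolding K_def
    by (intro compact_uniformly_continuous continuous_on_subset[OF f] compact_Times) auto
  then obtain \<delta> where "\<delta> > 0" and \<delta>: "\<And>p p'. p \<in> K \<Longrightarrow> p' \<in> K \<Longrightarrow> dist p' p < \<delta> \<Longrightarrow>
      dist (f p') (f p) < \<epsilon>"
    using \<epsilon> unfolding uniformly_continuous_on_def by metis
  show thesis
  proof (rule that[of "min \<delta> 1"])
    fix u :: 'a and t assume u: "norm u < min \<delta> 1" and t: "t \<in> S"
    have "dist (u, t) (0, t) < \<delta>" "(u, t) \<in> K" "(0, t) \<in> K"
      using u t by (simp_all add: K_def dist_Pair_Pair)
    then show "\<bar>f (u, t)\<bar> < \<epsilon>" using \<delta> zero[OF t] by (fastforce simp: dist_real_def)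
  qed (use \<open>\<delta> > 0\<close> in simp)
qed

lemma uniformly_continuous_near_compact:
  fixes g :: "'a::heine_borel \<Rightarrow> 'b::metric_space"
  assumes g: "continuous_on UNIV g" and C: "compact C" and \<epsilon>: "\<epsilon> > 0"
  obtains \<rho> where "\<rho> > 0" "\<And>z z'. z \<in> C \<Longrightarrow> dist z' z < \<rho> \<Longrightarrow> dist (g z') (g z) < \<epsilon>"
proof -
  obtain a R where CR: "C \<subseteq> cball a R"
    using bounded_subset_cball compact_imp_bounded[OF C] by blast
  define K where "K = cball a (R + 1)"
  have "uniformly_continuous_on K g"
    unfolding K_def by (intro compact_uniformly_continuous continuous_on_subset[OF g]) auto
  then obtain \<delta> where "\<delta> > 0" and \<delta>: "\<And>z z'. z \<in> K \<Longrightarrow> z' \<in> K \<Longrightarrow> dist z' z < \<delta> \<Longrightarrow>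
      dist (g z') (g z) < \<epsilon>"
    using \<epsilon> unfolding uniformly_continuous_on_def by metis
  show thesis
  proof (rule that[of "min \<delta> 1"])
    fix z z' assume z: "z \<in> C" and z': "dist z' z < min \<delta> 1"
    have "dist a z \<le> R" using CR z by auto
    then have "z \<in> K" "z' \<in> K"
      using z' dist_triangle[of a z' z] by (auto simp: K_def dist_commute)
    then show "dist (g z') (g z) < \<epsilon>" using \<delta> z' by simp
  qed (use \<open>\<delta> > 0\<close> in simp)
qed

section \<open>Cubic Hermite interpolation\<close>

definition hermite_c2 :: "real \<Rightarrow> R2 \<Rightarrow> R2 \<Rightarrow> real" where
  "hermite_c2 T d e = (3 * (fst e - fst d - snd d * T) - (snd e - snd d) * T) / T^2"

definition hermite_c3 :: "real \<Rightarrow> R2 \<Rightarrow> R2 \<Rightarrow> real" where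
  "hermite_c3 T d e = ((snd e - snd d) * T - 2 * (fst e - fst d - snd d * T)) / T^3"

definition hermite :: "real \<Rightarrow> R2 \<Rightarrow> R2 \<Rightarrow> real \<Rightarrow> real" where
  "hermite T d e t = fst d + snd d * t + hermite_c2 T d e * t^2 + hermite_c3 T d e * t^3"

definition hermite_d1 :: "real \<Rightarrow> R2 \<Rightarrow> R2 \<Rightarrow> real \<Rightarrow> real" where
  "hermite_d1 T d e t = snd d + 2 * hermite_c2 T d e * t + 3 * hermite_c3 T d e * t^2"

definition hermite_d2 :: "real \<Rightarrow> R2 \<Rightarrow> R2 \<Rightarrow> real \<Rightarrow> real" where
  "hermite_d2 T d e t = 2 * hermite_c2 T d e + 6 * hermite_c3 T d e * t"

definition hermite_path :: "real \<Rightarrow> R2 \<Rightarrow> R2 \<Rightarrow> real \<Rightarrow> R2" where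
  "hermite_path T d e t = (hermite T d e t, hermite_d1 T d e t)"

lemma hermite_0 [simp]: "hermite T d e 0 = fst d"
  and hermite_d1_0 [simp]: "hermite_d1 T d e 0 = snd d"
  by (simp_all add: hermite_def hermite_d1_def)

lemma hermite_path_0 [simp]: "hermite_path T d e 0 = d"
  by (simp add: hermite_path_def)

lemma hermite_path_end:
  assumes "T \<noteq> 0"
  shows "hermite_path T d e T = e"
  using assms
  by (simp add: hermite_path_def hermite_def hermite_d1_def hermite_c2_def hermite_c3_def
      field_simps power2_eq_square power3_eq_cube)

lemma hermite_path_rest [simp]: "hermite_path T (p, 0) (p, 0) t = (p, 0)"
  by (simp add: hermite_path_def hermite_def hermite_d1_def hermite_c2_def hermite_c3_def)

lemma hermite_has_derivative:
  "(hermite T d e has_real_derivative hermite_d1 T d e t) (at t within S)"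
  unfolding hermite_def hermite_d1_def by (auto intro!: derivative_eq_intros simp: power2_eq_square)

lemma hermite_d1_has_derivative:
  "(hermite_d1 T d e has_real_derivative hermite_d2 T d e t) (at t within S)"
  unfolding hermite_d1_def hermite_d2_def by (auto intro!: derivative_eq_intros)

lemma hermite_d1_lipschitz:
  assumes "0 \<le> T"
  shows "(2 * \<bar>hermite_c2 T d e\<bar> + 6 * \<bar>hermite_c3 T d e\<bar> * T)-lipschitz_on {0..T} (hermite_d1 T d e)"
proof (rule lipschitz_onI)
  fix s t assume "s \<in> {0..T}" "t \<in> {0..T}"
  then have "\<bar>hermite_c3 T d e\<bar> * \<bar>s + t\<bar> \<le> \<bar>hermite_c3 T d e\<bar> * (2 * T)"
    by (intro mult_left_mono) auto
  then have "\<bar>2 * hermite_c2 T d e + 3 * hermite_c3 T d e * (s + t)\<bar>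
      \<le> 2 * \<bar>hermite_c2 T d e\<bar> + 6 * \<bar>hermite_c3 T d e\<bar> * T"
    using abs_triangle_ineq[of "2 * hermite_c2 T d e" "3 * hermite_c3 T d e * (s + t)"]
    by (simp add: abs_mult)
  moreover have "hermite_d1 T d e s - hermite_d1 T d e t
      = (2 * hermite_c2 T d e + 3 * hermite_c3 T d e * (s + t)) * (s - t)"
    by (simp add: hermite_d1_def algebra_simps power2_eq_square)
  ultimately show "dist (hermite_d1 T d e s) (hermite_d1 T d e t)
      \<le> (2 * \<bar>hermite_c2 T d e\<bar> + 6 * \<bar>hermite_c3 T d e\<bar> * T) * dist s t"
    by (simp add: dist_real_def abs_mult mult_right_mono)
qed (use assms in simp)

lemma hermite_uniformly_small:
  assumes "\<epsilon> > 0"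
  obtains r where "r > 0" "\<And>d e t. norm d < r \<Longrightarrow> norm e < r \<Longrightarrow> t \<in> {0..T} \<Longrightarrow>
    \<bar>hermite T d e t\<bar> + \<bar>hermite_d1 T d e t\<bar> + \<bar>hermite_d2 T d e t\<bar> < \<epsilon>"
proof -
  define f where "f p = \<bar>hermite T (fst (fst p)) (snd (fst p)) (snd p)\<bar>
    + \<bar>hermite_d1 T (fst (fst p)) (snd (fst p)) (snd p)\<bar>
    + \<bar>hermite_d2 T (fst (fst p)) (snd (fst p)) (snd p)\<bar>" for p :: "(R2 \<times> R2) \<times> real"
  have "continuous_on UNIV f"
    unfolding f_def hermite_def hermite_d1_def hermite_d2_def hermite_c2_def hermite_c3_def
      divide_inverse
    by (intro continuous_intros)
  moreover have "f (0, t) = 0" for t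
    by (simp add: f_def hermite_def hermite_d1_def hermite_d2_def hermite_c2_def hermite_c3_def)
  ultimately obtain r where "r > 0" and r: "\<And>u t. norm u < r \<Longrightarrow> t \<in> {0..T} \<Longrightarrow> \<bar>f (u, t)\<bar> < \<epsilon>"
    using uniformly_small_near_zero[OF _ compact_Icc _ assms] by blast
  show thesis
  proof (rule that[of "r/2"])
    fix d e :: R2 and t assume "norm d < r/2" "norm e < r/2" "t \<in> {0..T}"
    moreover have "norm (d, e) \<le> norm d + norm e" by (rule norm_Pair_le)
    ultimately show "\<bar>hermite T d e t\<bar> + \<bar>hermite_d1 T d e t\<bar> + \<bar>hermite_d2 T d e t\<bar> < \<epsilon>"
      using r[of "(d, e)" t] by (simp add: f_def)
  qed (use \<open>r > 0\<close> in simp)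
qed

section \<open>Admissible paths and the action\<close>

lemma admissible_continuous_on:
  assumes "admissible T x \<psi>"
  shows "continuous_on {0..T} \<psi>"
proof -
  have "continuous_on {0..T} (\<lambda>s. fst (\<psi> s))"
    using assms unfolding admissible_def continuous_on_eq_continuous_within
    by (blast intro: DERIV_continuous)
  moreover have "continuous_on {0..T} (\<lambda>s. snd (\<psi> s))"
    using assms by (simp add: admissible_def)
  ultimately show ?thesis using continuous_on_Pair by fastforce
qed

lemma admissible_add:
  assumes "admissible T x \<psi>" "admissible T y \<phi>"
  shows "admissible T (x + y) (\<lambda>t. \<psi> t + \<phi> t)"
  using assms unfolding admissible_def by (auto intro!: DERIV_add continuous_on_add abs_cont_on_add)

lemma admissible_hermite_path:
  assumes "0 \<le> T"
  shows "admissible T d (hermite_path T d e)"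
proof -
  have "continuous_on {0..T} (hermite_d1 T d e)"
    by (rule DERIV_continuous_on) (rule hermite_d1_has_derivative)
  then show ?thesis
    unfolding admissible_def
    using hermite_has_derivative lipschitz_on_imp_abs_cont_on[OF hermite_d1_lipschitz[OF assms]]
    by (simp add: hermite_path_def)
qed

definition action_density :: "(R2 \<Rightarrow> real) \<Rightarrow> (R2 \<Rightarrow> real) \<Rightarrow> (real \<Rightarrow> R2) \<Rightarrow> real \<Rightarrow> real"
  where "action_density b \<sigma> \<psi> t = ((deriv (\<lambda>s. snd (\<psi> s)) t - b (\<psi> t)) / \<sigma> (\<psi> t))^2"

lemma action_eq_density_integral:
  assumes "admissible T x \<psi>"
  shows "action b \<sigma> T x \<psi>
    = 1/2 * (\<integral>\<^sup>+t. ennreal (action_density b \<sigma> \<psi> t) * indicator {0..T} t \<partial>lebesgue)"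
  using assms by (simp add: action_def action_density_def power_divide)

lemma admissible_if_action_less_top:
  assumes "action b \<sigma> T x \<psi> < \<infinity>"
  shows "admissible T x \<psi>"
  using assms by (auto simp: action_def split: if_splits)

lemma action_hermite_path_less_top:
  fixes b \<sigma> :: "R2 \<Rightarrow> real"
  assumes b: "continuous_on UNIV b" and \<sigma>: "continuous_on UNIV \<sigma>" and \<sigma>_nz: "\<forall>z. \<sigma> z \<noteq> 0"
    and T: "0 \<le> T"
  shows "action b \<sigma> T d (hermite_path T d e) < \<infinity>"
proof -
  define \<psi> where "\<psi> = hermite_path T d e"
  have deriv: "deriv (\<lambda>s. snd (\<psi> s)) = hermite_d2 T d e"
    by (auto simp: \<psi>_def hermite_path_def intro: DERIV_imp_deriv[OF hermite_d1_has_derivative])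
  have "continuous_on UNIV \<psi>"
    unfolding \<psi>_def hermite_path_def hermite_def hermite_d1_def by (intro continuous_intros)
  then have "continuous_on {0..T} (\<lambda>t. b (\<psi> t))" "continuous_on {0..T} (\<lambda>t. \<sigma> (\<psi> t))"
    by (auto intro: continuous_on_compose2[OF b] continuous_on_compose2[OF \<sigma>]
        continuous_on_subset)
  then have "continuous_on {0..T} (action_density b \<sigma> \<psi>)"
    unfolding action_density_def deriv hermite_d2_def
    by (intro continuous_intros) (auto simp: \<sigma>_nz[rule_format])
  then have "(\<integral>\<^sup>+t. ennreal (action_density b \<sigma> \<psi> t) * indicator {0..T} t \<partial>lebesgue) < \<infinity>"
    by (rule nn_integral_indicator_Icc_less_top)
  moreover have "(1/2::ennreal) < \<infinity>"
    by (simp add: less_top[symmetric] ennreal_divide_eq_top_iff)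
  ultimately show ?thesis
    unfolding \<psi>_def action_eq_density_integral[OF admissible_hermite_path[OF T]]
    by (simp add: ennreal_mult_less_top)
qed

lemma action_le_of_density_le:
  assumes adm: "admissible T x \<psi>" and adm': "admissible T x' \<psi>'" and \<gamma>: "0 < \<gamma>" and T: "0 \<le> T"
    and le: "\<And>t. t \<in> {0..T} \<Longrightarrow>
      action_density b \<sigma> \<psi>' t \<le> (1 + \<gamma>) * action_density b \<sigma> \<psi> t + \<gamma>"
  shows "action b \<sigma> T x' \<psi>' \<le> ennreal (1 + \<gamma>) * action b \<sigma> T x \<psi> + ennreal (\<gamma> * T / 2)"
proof -
  define h where "h = (\<lambda>\<psi> t. ennreal (action_density b \<sigma> \<psi> t) * indicator {0..T} t)"
  define box where "box = (\<lambda>t. ennreal \<gamma> * indicator {0..T::real} t)"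
  have "h \<psi>' t \<le> ennreal (1 + \<gamma>) * h \<psi> t + box t" for t
  proof (cases "t \<in> {0..T}")
    case True
    have "ennreal (action_density b \<sigma> \<psi>' t)
        \<le> ennreal ((1 + \<gamma>) * action_density b \<sigma> \<psi> t + \<gamma>)"
      using le[OF True] by (rule ennreal_leI)
    then show ?thesis
      using True \<gamma> by (simp add: h_def box_def action_density_def ennreal_mult' ennreal_plus)
  qed (simp add: h_def box_def)
  moreover have "box \<in> borel_measurable lebesgue"
    unfolding box_def by (intro borel_measurable_times_ennreal borel_measurable_const
        borel_measurable_indicator) simp
  ultimately have "integral\<^sup>N lebesgue (h \<psi>')
      \<le> (\<integral>\<^sup>+t. ennreal (1 + \<gamma>) * h \<psi> t \<partial>lebesgue) + integral\<^sup>N lebesgue box"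
    by (rule nn_integral_le_add) (simp add: box_def indicator_def)
  also have "\<dots> \<le> ennreal (1 + \<gamma>) * integral\<^sup>N lebesgue (h \<psi>) + ennreal (\<gamma> * T)"
    using nn_integral_cmult_le[where a="1 + \<gamma>" and g="h \<psi>" and M=lebesgue] \<gamma> T
    by (intro add_mono) (simp_all add: box_def nn_integral_cmult_indicator emeasure_lborel_Icc_eq
        ennreal_mult)
  finally have I: "integral\<^sup>N lebesgue (h \<psi>')
      \<le> ennreal (1 + \<gamma>) * integral\<^sup>N lebesgue (h \<psi>) + ennreal (\<gamma> * T)" .
  have "action b \<sigma> T x' \<psi>' = 1/2 * integral\<^sup>N lebesgue (h \<psi>')"
    using action_eq_density_integral[OF adm'] by (simp add: h_def)
  also have "\<dots> \<le> 1/2 * (ennreal (1 + \<gamma>) * integral\<^sup>N lebesgue (h \<psi>) + ennreal (\<gamma> * T))"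
    by (rule mult_left_mono[OF I]) simp
  also have "\<dots> = ennreal (1 + \<gamma>) * (1/2 * integral\<^sup>N lebesgue (h \<psi>)) + ennreal (\<gamma> * T / 2)"
    by (simp add: distrib_left mult.left_commute ennreal_half_mult)
  also have "1/2 * integral\<^sup>N lebesgue (h \<psi>) = action b \<sigma> T x \<psi>"
    using action_eq_density_integral[OF adm] by (simp add: h_def)
  finally show ?thesis .
qed

section \<open>Perturbing the endpoints of a path\<close>

lemma perturbed_quotient_square_le:
  fixes g q \<beta> \<beta>' s s' \<gamma> :: real
  assumes \<gamma>: "0 < \<gamma>" "\<gamma> \<le> 1" and s: "s \<noteq> 0"
    and hs: "\<bar>s - s'\<bar> \<le> \<gamma>/8 * \<bar>s'\<bar>" and hq: "\<bar>q + \<beta> - \<beta>'\<bar> \<le> \<gamma>/8 * \<bar>s'\<bar>"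
  shows "((g + q - \<beta>') / s')^2 \<le> (1 + \<gamma>) * ((g - \<beta>) / s)^2 + \<gamma>"
proof -
  define c where "c = \<gamma>/8"
  define X where "X = \<bar>(g - \<beta>) / s\<bar>"
  have c: "0 < c" "c \<le> 1/8" using \<gamma> by (auto simp: c_def)
  have s': "s' \<noteq> 0" using s hs by auto
  have "\<bar>s\<bar> \<le> \<bar>s'\<bar> + \<bar>s - s'\<bar>" by linarith
  then have "\<bar>s\<bar> \<le> (1 + c) * \<bar>s'\<bar>" using hs by (simp add: c_def algebra_simps)
  then have r1: "\<bar>s / s'\<bar> \<le> 1 + c" using s' by (simp add: divide_le_eq abs_divide)
  have r2: "\<bar>(q + \<beta> - \<beta>') / s'\<bar> \<le> c" using hq s' by (simp add: abs_divide divide_le_eq c_def)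
  have "(g + q - \<beta>') / s' = (g - \<beta>) / s * (s / s') + (q + \<beta> - \<beta>') / s'"
    using s s' by (simp add: field_simps)
  moreover have "\<bar>(g - \<beta>) / s * (s / s')\<bar> \<le> X * (1 + c)"
    unfolding abs_mult X_def by (rule mult_left_mono[OF r1]) simp
  ultimately have "\<bar>(g + q - \<beta>') / s'\<bar> \<le> X * (1 + c) + c" using r2 by linarith
  then have "((g + q - \<beta>') / s')^2 \<le> (X * (1 + c) + c)^2"
    by (metis power2_abs abs_ge_zero power_mono)
  also have "\<dots> = X^2 * (1 + c)^2 + 2 * X * c * (1 + c) + c^2"
    by (simp add: power2_eq_square algebra_simps)
  also have "\<dots> \<le> X^2 * (1 + c)^2 + c * (1 + c) * (X^2 + 1) + c^2"
  proof -
    have "2 * X \<le> X^2 + 1"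
      using sum_squares_ge_zero[of "X - 1" 0] by (simp add: power2_eq_square algebra_simps)
    then have "2 * X * (c * (1 + c)) \<le> (X^2 + 1) * (c * (1 + c))"
      using c by (intro mult_right_mono) auto
    then show ?thesis by (simp add: algebra_simps)
  qed
  also have "\<dots> = X^2 * (1 + 3*c + 2*c^2) + (c + 2*c^2)" by (simp add: power2_eq_square algebra_simps)
  also have "\<dots> \<le> X^2 * (1 + 8*c) + 8*c"
  proof -
    have "2*c^2 \<le> 5*c" using c by (simp add: power2_eq_square)
    then have "X^2 * (1 + 3*c + 2*c^2) \<le> X^2 * (1 + 8*c)" using c by (intro mult_left_mono) auto
    then show ?thesis using \<open>2*c^2 \<le> 5*c\<close> c by linarith
  qed
  also have "\<dots> = (1 + \<gamma>) * ((g - \<beta>) / s)^2 + \<gamma>" by (simp add: X_def c_def power_divide)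
  finally show ?thesis .
qed

text \<open>If f is not differentiable at t neither is the sum, and both derivatives are the same
  unspecified value.\<close>

lemma deriv_add_DERIV:
  assumes "(g has_real_derivative g') (at t)"
  shows "deriv (\<lambda>s. f s + g s) t = deriv f t + (if f differentiable (at t) then g' else 0)"
proof (cases "f differentiable (at t)")
  case True
  then have "((\<lambda>s. f s + g s) has_real_derivative deriv f t + g') (at t)"
    using assms by (auto intro: DERIV_add simp: DERIV_deriv_iff_real_differentiable)
  then show ?thesis using True by (simp add: DERIV_imp_deriv)
next
  case False
  have "\<not> (\<lambda>s. f s + g s) differentiable (at t)"
  proof
    assume "(\<lambda>s. f s + g s) differentiable (at t)"
    moreover have "g differentiable (at t)" using assms real_differentiable_def by blast
    ultimately have "(\<lambda>s. (f s + g s) - g s) differentiable (at t)" by (rule differentiable_diff)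
    then show False using False by simp
  qed
  then show ?thesis
    using False by (simp add: deriv_def real_differentiable_def)
qed

lemma coefficients_stable_near_compact:
  fixes b \<sigma> :: "'a::heine_borel \<Rightarrow> real"
  assumes b: "continuous_on UNIV b" and \<sigma>: "continuous_on UNIV \<sigma>" and \<sigma>_nz: "\<forall>z. \<sigma> z \<noteq> 0"
    and C: "compact C" "C \<noteq> {}" and \<gamma>: "0 < \<gamma>" "\<gamma> \<le> 1"
  obtains \<rho> where "\<rho> > 0" "\<And>z z' q. z \<in> C \<Longrightarrow> dist z' z < \<rho> \<Longrightarrow> \<bar>q\<bar> < \<rho> \<Longrightarrow>
    \<bar>\<sigma> z - \<sigma> z'\<bar> \<le> \<gamma>/8 * \<bar>\<sigma> z'\<bar> \<and> \<bar>q + b z - b z'\<bar> \<le> \<gamma>/8 * \<bar>\<sigma> z'\<bar>"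
proof -
  obtain z0 where "z0 \<in> C" and z0: "\<forall>z\<in>C. \<bar>\<sigma> z0\<bar> \<le> \<bar>\<sigma> z\<bar>"
    using continuous_attains_inf[OF C, of "\<lambda>z. \<bar>\<sigma> z\<bar>"] continuous_on_subset[OF \<sigma>]
    by (auto intro: continuous_intros)
  define m where "m = \<bar>\<sigma> z0\<bar>"
  have m: "m > 0" "\<And>z. z \<in> C \<Longrightarrow> m \<le> \<bar>\<sigma> z\<bar>" using \<sigma>_nz z0 by (auto simp: m_def)
  define \<epsilon> where "\<epsilon> = \<gamma> * m / 32"
  have \<epsilon>: "\<epsilon> > 0" "4 * \<epsilon> \<le> m / 8" using \<gamma> m by (auto simp: \<epsilon>_def)
  obtain \<rho>\<sigma> where "\<rho>\<sigma> > 0"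
    and \<rho>\<sigma>: "\<And>z z'. z \<in> C \<Longrightarrow> dist z' z < \<rho>\<sigma> \<Longrightarrow> dist (\<sigma> z') (\<sigma> z) < 2 * \<epsilon>"
    using uniformly_continuous_near_compact[OF \<sigma> C(1), of "2 * \<epsilon>"] \<epsilon> by auto
  obtain \<rho>b where "\<rho>b > 0" and \<rho>b: "\<And>z z'. z \<in> C \<Longrightarrow> dist z' z < \<rho>b \<Longrightarrow> dist (b z') (b z) < \<epsilon>"
    using uniformly_continuous_near_compact[OF b C(1), of \<epsilon>] \<epsilon> by auto
  show thesis
  proof (rule that[of "min (min \<rho>\<sigma> \<rho>b) \<epsilon>"])
    fix z z' q assume z: "z \<in> C" and z': "dist z' z < min (min \<rho>\<sigma> \<rho>b) \<epsilon>"
      and q: "\<bar>q\<bar> < min (min \<rho>\<sigma> \<rho>b) \<epsilon>"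
    have \<sigma>z: "\<bar>\<sigma> z - \<sigma> z'\<bar> < 2 * \<epsilon>" and bz: "\<bar>b z - b z'\<bar> < \<epsilon>"
      using \<rho>\<sigma>[OF z] \<rho>b[OF z] z' by (auto simp: dist_real_def abs_minus_commute)
    have "m / 2 \<le> \<bar>\<sigma> z'\<bar>" using m(2)[OF z] \<sigma>z \<epsilon> by linarith
    then have "2 * \<epsilon> \<le> \<gamma>/8 * \<bar>\<sigma> z'\<bar>"
      using mult_left_mono[of "m/2" "\<bar>\<sigma> z'\<bar>" "\<gamma>/8"] \<gamma> by (simp add: \<epsilon>_def)
    then show "\<bar>\<sigma> z - \<sigma> z'\<bar> \<le> \<gamma>/8 * \<bar>\<sigma> z'\<bar> \<and> \<bar>q + b z - b z'\<bar> \<le> \<gamma>/8 * \<bar>\<sigma> z'\<bar>"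
      using \<sigma>z bz q by linarith
  qed (use \<open>\<rho>\<sigma> > 0\<close> \<open>\<rho>b > 0\<close> \<epsilon> in simp)
qed

lemma action_density_add_hermite_le:
  fixes b \<sigma> :: "R2 \<Rightarrow> real"
  assumes \<gamma>: "0 < \<gamma>" "\<gamma> \<le> 1" and \<sigma>_nz: "\<forall>z. \<sigma> z \<noteq> 0"
    and small: "\<bar>hermite T d e t\<bar> + \<bar>hermite_d1 T d e t\<bar> + \<bar>hermite_d2 T d e t\<bar> < \<rho>"
    and stable: "\<And>z' q. dist z' (\<psi> t) < \<rho> \<Longrightarrow> \<bar>q\<bar> < \<rho> \<Longrightarrow>
      \<bar>\<sigma> (\<psi> t) - \<sigma> z'\<bar> \<le> \<gamma>/8 * \<bar>\<sigma> z'\<bar> \<and> \<bar>q + b (\<psi> t) - b z'\<bar> \<le> \<gamma>/8 * \<bar>\<sigma> z'\<bar>"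
  shows "action_density b \<sigma> (\<lambda>s. \<psi> s + hermite_path T d e s) t
    \<le> (1 + \<gamma>) * action_density b \<sigma> \<psi> t + \<gamma>"
proof -
  define \<psi>' where "\<psi>' = (\<lambda>s. \<psi> s + hermite_path T d e s)"
  define q where "q = (if (\<lambda>s. snd (\<psi> s)) differentiable (at t) then hermite_d2 T d e t else 0)"
  have deriv: "deriv (\<lambda>s. snd (\<psi>' s)) t = deriv (\<lambda>s. snd (\<psi> s)) t + q"
    using deriv_add_DERIV[OF hermite_d1_has_derivative, of "\<lambda>s. snd (\<psi> s)"]
    by (simp add: \<psi>'_def hermite_path_def q_def)
  have "dist (\<psi>' t) (\<psi> t) \<le> \<bar>hermite T d e t\<bar> + \<bar>hermite_d1 T d e t\<bar>"
    using norm_Pair_le[of "hermite T d e t" "hermite_d1 T d e t"]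
    by (simp add: \<psi>'_def hermite_path_def dist_norm)
  moreover have "\<bar>q\<bar> \<le> \<bar>hermite_d2 T d e t\<bar>" by (simp add: q_def)
  ultimately have "\<bar>\<sigma> (\<psi> t) - \<sigma> (\<psi>' t)\<bar> \<le> \<gamma>/8 * \<bar>\<sigma> (\<psi>' t)\<bar>"
    "\<bar>q + b (\<psi> t) - b (\<psi>' t)\<bar> \<le> \<gamma>/8 * \<bar>\<sigma> (\<psi>' t)\<bar>"
    using stable[of "\<psi>' t" q] small by auto
  then have "action_density b \<sigma> \<psi>' t \<le> (1 + \<gamma>) * action_density b \<sigma> \<psi> t + \<gamma>"
    using perturbed_quotient_square_le[OF \<gamma> \<sigma>_nz[rule_format]]
    by (simp add: action_density_def deriv)
  then show ?thesis by (simp add: \<psi>'_def)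
qed

lemma margin_exists:
  fixes a c T :: real
  assumes "0 \<le> a" "a < c" "0 \<le> T"
  obtains \<gamma> where "0 < \<gamma>" "\<gamma> \<le> 1" "(1 + \<gamma>) * a + \<gamma> * T / 2 < c"
proof -
  define \<gamma> where "\<gamma> = min 1 ((c - a) / (a + T + 1))"
  have \<gamma>: "0 < \<gamma>" "\<gamma> \<le> 1" using assms by (auto simp: \<gamma>_def)
  have "\<gamma> \<le> (c - a) / (a + T + 1)" by (simp add: \<gamma>_def)
  then have "\<gamma> * (a + T + 1) \<le> c - a" using assms by (simp add: le_divide_eq)
  moreover have "0 \<le> T * \<gamma>" using \<gamma> assms by simp
  ultimately have "(1 + \<gamma>) * a + \<gamma> * T / 2 < c" using \<gamma> by (simp add: algebra_simps)
  with \<gamma> show thesis by (rule that)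
qed

lemma action_perturb_endpoints:
  fixes b \<sigma> :: "R2 \<Rightarrow> real"
  assumes b: "continuous_on UNIV b" and \<sigma>: "continuous_on UNIV \<sigma>" and \<sigma>_nz: "\<forall>z. \<sigma> z \<noteq> 0"
    and T: "T > 0" and adm: "admissible T x \<psi>" and act: "action b \<sigma> T x \<psi> < ennreal c"
  obtains r where "r > 0" "\<And>x' y'. dist x' x < r \<Longrightarrow> dist y' (\<psi> T) < r \<Longrightarrow>
    \<exists>\<psi>'. admissible T x' \<psi>' \<and> \<psi>' T = y' \<and> action b \<sigma> T x' \<psi>' < ennreal c"
proof -
  obtain a where a: "action b \<sigma> T x \<psi> = ennreal a" "0 \<le> a" "a < c"
    using act by (cases "action b \<sigma> T x \<psi>") (auto simp: ennreal_less_iff)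
  obtain \<gamma> where \<gamma>: "0 < \<gamma>" "\<gamma> \<le> 1" and \<gamma>c: "(1 + \<gamma>) * a + \<gamma> * T / 2 < c"
    using margin_exists[OF a(2,3) less_imp_le[OF T]] by blast
  define C where "C = \<psi> ` {0..T}"
  have C: "compact C" "C \<noteq> {}"
    using compact_continuous_image[OF admissible_continuous_on[OF adm]] T by (auto simp: C_def)
  obtain \<rho> where "\<rho> > 0" and \<rho>: "\<And>z z' q. z \<in> C \<Longrightarrow> dist z' z < \<rho> \<Longrightarrow> \<bar>q\<bar> < \<rho> \<Longrightarrow>
    \<bar>\<sigma> z - \<sigma> z'\<bar> \<le> \<gamma>/8 * \<bar>\<sigma> z'\<bar> \<and> \<bar>q + b z - b z'\<bar> \<le> \<gamma>/8 * \<bar>\<sigma> z'\<bar>"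
    using coefficients_stable_near_compact[OF b \<sigma> \<sigma>_nz C \<gamma>] by blast
  obtain r where "r > 0" and r: "\<And>d e t. norm d < r \<Longrightarrow> norm e < r \<Longrightarrow> t \<in> {0..T} \<Longrightarrow>
    \<bar>hermite T d e t\<bar> + \<bar>hermite_d1 T d e t\<bar> + \<bar>hermite_d2 T d e t\<bar> < \<rho>"
    using hermite_uniformly_small[OF \<open>\<rho> > 0\<close>] by blast
  show thesis
  proof (rule that[OF \<open>r > 0\<close>])
    fix x' y' assume x': "dist x' x < r" and y': "dist y' (\<psi> T) < r"
    define d e where "d = x' - x" and "e = y' - \<psi> T"
    define \<psi>' where "\<psi>' = (\<lambda>t. \<psi> t + hermite_path T d e t)"
    have adm': "admissible T x' \<psi>'"
      using admissible_add[OF adm admissible_hermite_path[of T d e]] T by (simp add: \<psi>'_def d_def)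
    have "\<psi>' T = y'" using T by (simp add: \<psi>'_def hermite_path_end e_def)
    have "action_density b \<sigma> \<psi>' t \<le> (1 + \<gamma>) * action_density b \<sigma> \<psi> t + \<gamma>" if "t \<in> {0..T}" for t
      unfolding \<psi>'_def using that x' y'
      by (intro action_density_add_hermite_le[OF \<gamma> \<sigma>_nz r] \<rho>)
        (auto simp: d_def e_def dist_norm C_def)
    then have "action b \<sigma> T x' \<psi>' \<le> ennreal (1 + \<gamma>) * ennreal a + ennreal (\<gamma> * T / 2)"
      unfolding a(1)[symmetric] using T by (intro action_le_of_density_le[OF adm adm' \<gamma>(1)]) auto
    also have "\<dots> = ennreal ((1 + \<gamma>) * a + \<gamma> * T / 2)"
      using \<gamma> a T by (subst ennreal_plus) (simp_all add: ennreal_mult'')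
    also have "\<dots> < ennreal c"
      using \<gamma>c \<gamma> a T by (subst ennreal_less_iff) auto
    finally show "\<exists>\<psi>'. admissible T x' \<psi>' \<and> \<psi>' T = y' \<and> action b \<sigma> T x' \<psi>' < ennreal c"
      using adm' \<open>\<psi>' T = y'\<close> by blast
  qed
qed

section \<open>The quasipotential\<close>

lemma quasipot_le_action:
  assumes "T > 0" "continuous_on {0..T} \<psi>" "\<psi> 0 = x"
  shows "quasipot b \<sigma> x (\<psi> T) \<le> action b \<sigma> T x \<psi>"
  unfolding quasipot_def by (rule INF_lower2[where i="(T, \<psi>)"]) (use assms in auto)

lemma quasipot_lessE:
  assumes "quasipot b \<sigma> x y < c"
  obtains T \<psi> where "T > 0" "admissible T x \<psi>" "\<psi> T = y" "action b \<sigma> T x \<psi> < c"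
proof -
  obtain T \<psi> where "T > 0" "\<psi> T = y" "action b \<sigma> T x \<psi> < c"
    using assms unfolding quasipot_def by (auto simp: INF_less_iff)
  moreover have "admissible T x \<psi>"
    by (rule admissible_if_action_less_top[of b \<sigma>])
      (use \<open>action b \<sigma> T x \<psi> < c\<close> in \<open>auto simp: less_top[symmetric]\<close>)
  ultimately show thesis using that by blast
qed

lemma quasipot_less_top:
  fixes b \<sigma> :: "R2 \<Rightarrow> real"
  assumes "continuous_on UNIV b" "continuous_on UNIV \<sigma>" "\<forall>z. \<sigma> z \<noteq> 0"
  shows "quasipot b \<sigma> x y < \<infinity>"
proof -
  have "quasipot b \<sigma> x y \<le> action b \<sigma> 1 x (hermite_path 1 x y)"
    using quasipot_le_action[OF _ admissible_continuous_on[OF admissible_hermite_path]]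
    by (metis hermite_path_0 hermite_path_end zero_less_one zero_le_one one_neq_zero)
  also have "\<dots> < \<infinity>" using action_hermite_path_less_top[OF assms] by simp
  finally show ?thesis .
qed

lemma quasipot_equilibrium:
  assumes "b (p, 0) = 0"
  shows "quasipot b \<sigma> (p, 0) (p, 0) = 0"
proof -
  have "hermite_path 1 (p, 0) (p, 0) = (\<lambda>_. (p, 0))" by auto
  then have adm: "admissible 1 (p, 0) (\<lambda>_. (p, 0))"
    using admissible_hermite_path[of 1 "(p, 0)" "(p, 0)"] by simp
  then have "action b \<sigma> 1 (p, 0) (\<lambda>_. (p, 0)) = 0"
    using assms by (simp add: action_eq_density_integral action_density_def)
  moreover have "quasipot b \<sigma> (p, 0) (p, 0) \<le> action b \<sigma> 1 (p, 0) (\<lambda>_. (p, 0))"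
    using quasipot_le_action[of 1 "\<lambda>_. (p, 0)"] by simp
  ultimately show ?thesis by simp
qed

section \<open>Upper semicontinuity\<close>

definition upper_semicontinuous_at :: "('a::topological_space \<Rightarrow> 'b::linorder) \<Rightarrow> 'a \<Rightarrow> bool"
  where "upper_semicontinuous_at F z \<longleftrightarrow> (\<forall>c. F z < c \<longrightarrow> (\<forall>\<^sub>F p in nhds z. F p < c))"

lemma upper_semicontinuous_at_punctured_SUP:
  fixes F :: "'a::metric_space \<Rightarrow> 'b::{complete_linorder, linorder_topology, dense_linorder}"
  assumes "upper_semicontinuous_at F z"
  shows "\<exists>L. ((\<lambda>\<delta>. SUP p \<in> ball z \<delta> - {z}. F p) \<longlongrightarrow> L) (at_right 0) \<and> L \<le> F z"
proof -
  define S where "S = (\<lambda>\<delta>::real. SUP p \<in> ball z \<delta> - {z}. F p)"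
  have "S a \<le> S b" if "a \<le> b" for a b
    unfolding S_def by (rule SUP_subset_mono) (use that in auto)
  then have "(S \<longlongrightarrow> Inf (S ` {0<..})) (at_right 0)"
    using Lim_right_bound[of UNIV 0 S bot] by simp
  moreover have "Inf (S ` {0<..}) \<le> F z"
  proof (rule dense_ge)
    fix c assume "F z < c"
    then obtain \<delta> where "\<delta> > 0" "\<And>p. dist p z < \<delta> \<Longrightarrow> F p < c"
      using assms unfolding upper_semicontinuous_at_def eventually_nhds_metric by blast
    then have "S \<delta> \<le> c" unfolding S_def by (intro SUP_least) (auto intro: less_imp_le simp: dist_commute)
    then show "Inf (S ` {0<..}) \<le> c" using \<open>\<delta> > 0\<close> by (meson INF_lower2 greaterThan_iff)
  qed
  ultimately show ?thesis unfolding S_def by blast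
qed

lemma upper_semicontinuous_at_bot_imp_isCont:
  fixes F :: "'a::t2_space \<Rightarrow> 'b::{linorder_topology, order_bot}"
  assumes "upper_semicontinuous_at F z" "F z = bot"
  shows "isCont F z"
proof -
  have "(F \<longlongrightarrow> F z) (nhds z)"
    using assms unfolding order_tendsto_iff upper_semicontinuous_at_def by simp
  moreover have "at z \<le> nhds z" unfolding at_within_def by (rule inf_le1)
  ultimately show ?thesis unfolding isCont_def by (rule tendsto_mono[rotated])
qed

lemma quasipot_upper_semicontinuous:
  fixes b \<sigma> :: "R2 \<Rightarrow> real"
  assumes b: "continuous_on UNIV b" and \<sigma>: "continuous_on UNIV \<sigma>" and \<sigma>_nz: "\<forall>z. \<sigma> z \<noteq> 0"
  shows "upper_semicontinuous_at (\<lambda>p. quasipot b \<sigma> (fst p) (snd p)) z"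
  unfolding upper_semicontinuous_at_def
proof (intro allI impI)
  fix c assume "quasipot b \<sigma> (fst z) (snd z) < c"
  then obtain w where "quasipot b \<sigma> (fst z) (snd z) < w" "w < c" using dense by blast
  then obtain w' where w': "w = ennreal w'" by (cases w) auto
  obtain T \<psi> where T: "T > 0" and adm: "admissible T (fst z) \<psi>" and "\<psi> T = snd z"
    and "action b \<sigma> T (fst z) \<psi> < ennreal w'"
    using \<open>quasipot b \<sigma> (fst z) (snd z) < w\<close> w' by (auto elim: quasipot_lessE)
  then obtain r where "r > 0" and r: "\<And>x' y'. dist x' (fst z) < r \<Longrightarrow> dist y' (snd z) < r \<Longrightarrow>
    \<exists>\<psi>'. admissible T x' \<psi>' \<and> \<psi>' T = y' \<and> action b \<sigma> T x' \<psi>' < ennreal w'"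
    using action_perturb_endpoints[OF b \<sigma> \<sigma>_nz T adm] by metis
  show "\<forall>\<^sub>F p in nhds z. quasipot b \<sigma> (fst p) (snd p) < c"
    unfolding eventually_nhds_metric
  proof (intro exI[of _ r] conjI allI impI \<open>r > 0\<close>)
    fix p assume "dist p z < r"
    then have "dist (fst p) (fst z) < r" "dist (snd p) (snd z) < r"
      using dist_fst_le[of p z] dist_snd_le[of p z] by linarith+
    then obtain \<psi>' where adm': "admissible T (fst p) \<psi>'" and "\<psi>' T = snd p"
      and "action b \<sigma> T (fst p) \<psi>' < ennreal w'"
      using r by blast
    moreover have "quasipot b \<sigma> (fst p) (\<psi>' T) \<le> action b \<sigma> T (fst p) \<psi>'"
      using adm' by (intro quasipot_le_action[OF T admissible_continuous_on])
        (auto simp: admissible_def)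
    ultimately have "quasipot b \<sigma> (fst p) (snd p) < w" using w' by simp
    then show "quasipot b \<sigma> (fst p) (snd p) < c" using \<open>w < c\<close> by simp
  qed
qed

section \<open>Uniform transit times\<close>

lemma compact_uniform_time_bound:
  fixes P :: "'a::metric_space \<Rightarrow> real \<Rightarrow> bool"
  assumes C: "compact C" and local: "\<And>x. x \<in> C \<Longrightarrow> \<exists>T>0. \<exists>r>0. \<forall>x'\<in>ball x r. P x' T"
  shows "\<exists>T0>0. \<forall>x\<in>C. \<exists>T\<in>{0<..T0}. P x T"
proof -
  obtain Tx rx where pos: "\<And>x. x \<in> C \<Longrightarrow> Tx x > 0 \<and> rx x > 0"
    and P: "\<And>x x'. x \<in> C \<Longrightarrow> x' \<in> ball x (rx x) \<Longrightarrow> P x' (Tx x)"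
    using local by metis
  have "C \<subseteq> (\<Union>x\<in>C. ball x (rx x))" using pos by force
  then obtain J where J: "J \<subseteq> C" "finite J" "C \<subseteq> (\<Union>x\<in>J. ball x (rx x))"
    using compactE_image[OF C, of C "\<lambda>x. ball x (rx x)"] by auto
  define T0 where "T0 = Max (insert 1 (Tx ` J))"
  have T0: "Tx x \<le> T0" if "x \<in> J" for x using J(2) that by (simp add: T0_def)
  have "T0 > 0" using J(2) by (simp add: T0_def Max_gr_iff)
  show ?thesis
  proof (intro exI[of _ T0] conjI ballI)
    fix x assume "x \<in> C"
    then obtain x0 where "x0 \<in> J" "x \<in> ball x0 (rx x0)" using J(3) by blast
    then show "\<exists>T\<in>{0<..T0}. P x T"
      using P[of x0 x] pos[of x0] J(1) T0[of x0] by (intro bexI[of _ "Tx x0"]) auto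
  qed (rule \<open>T0 > 0\<close>)
qed

lemma quasipot_less_uniform_time:
  fixes b \<sigma> :: "R2 \<Rightarrow> real"
  assumes b: "continuous_on UNIV b" and \<sigma>: "continuous_on UNIV \<sigma>" and \<sigma>_nz: "\<forall>z. \<sigma> z \<noteq> 0"
    and C: "compact C" and less: "\<forall>x\<in>C. quasipot b \<sigma> x y < ennreal c"
  shows "\<exists>T0>0. \<forall>x\<in>C. \<exists>T\<in>{0<..T0}. \<exists>\<psi>.
    continuous_on {0..T} \<psi> \<and> \<psi> 0 = x \<and> \<psi> T = y \<and> action b \<sigma> T x \<psi> < ennreal c"
proof (rule compact_uniform_time_bound[OF C])
  fix x assume "x \<in> C"
  then obtain T \<psi> where T: "T > 0" and adm: "admissible T x \<psi>" and "\<psi> T = y"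
    and "action b \<sigma> T x \<psi> < ennreal c"
    using less by (blast elim: quasipot_lessE)
  then obtain r where "r > 0" and r: "\<And>x' y'. dist x' x < r \<Longrightarrow> dist y' (\<psi> T) < r \<Longrightarrow>
    \<exists>\<psi>'. admissible T x' \<psi>' \<and> \<psi>' T = y' \<and> action b \<sigma> T x' \<psi>' < ennreal c"
    using action_perturb_endpoints[OF b \<sigma> \<sigma>_nz T adm] by blast
  have "\<exists>\<psi>. continuous_on {0..T} \<psi> \<and> \<psi> 0 = x' \<and> \<psi> T = y \<and> action b \<sigma> T x' \<psi> < ennreal c"
    if "x' \<in> ball x r" for x'
    using r[of x' y] \<open>r > 0\<close> \<open>\<psi> T = y\<close> that admissible_continuous_on
    by (auto simp: admissible_def dist_commute)
  then show "\<exists>T>0. \<exists>r>0. \<forall>x'\<in>ball x r. \<exists>\<psi>.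
    continuous_on {0..T} \<psi> \<and> \<psi> 0 = x' \<and> \<psi> T = y \<and> action b \<sigma> T x' \<psi> < ennreal c"
    using T \<open>r > 0\<close> by blast
qed

section \<open>Locally Lipschitz coefficients\<close>

lemma loc_lipschitz_continuous_on:
  fixes f :: "'a::metric_space \<Rightarrow> 'b::metric_space"
  assumes "loc_lipschitz f"
  shows "continuous_on UNIV f"
proof -
  have "isCont f z" for z
  proof -
    obtain r L where "r > 0" "L-lipschitz_on (cball z r) f"
      using assms unfolding loc_lipschitz_def by blast
    then have "continuous_on (cball z r) f" "z \<in> interior (cball z r)"
      using lipschitz_on_continuous_on interior_mono[OF ball_subset_cball, of z r] by auto
    then show ?thesis by (rule continuous_on_interior)
  qed
  then show ?thesis by (simp add: continuous_at_imp_continuous_on)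
qed

theorem lemma3p2:
  fixes b \<sigma> :: "R2 \<Rightarrow> real"
  assumes b_lip: "loc_lipschitz b"
    and \<sigma>_lip: "loc_lipschitz \<sigma>"
    and \<sigma>_nz: "\<forall>z. \<sigma> z \<noteq> 0"
  shows
    "(\<forall>x y (T::real). T > 0 \<longrightarrow>
        (\<exists>\<psi>. continuous_on {0..T} \<psi> \<and> \<psi> 0 = x \<and> \<psi> T = y \<and> action b \<sigma> T x \<psi> < \<infinity>))
     \<and> (\<forall>x y. quasipot b \<sigma> x y < \<infinity>)
     \<and> (\<forall>x y. \<exists>L. ((\<lambda>\<delta>. SUP p \<in> ball (x, y) \<delta> - {(x, y)}. quasipot b \<sigma> (fst p) (snd p))
                        \<longlongrightarrow> L) (at_right 0)
                  \<and> L \<le> quasipot b \<sigma> x y)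
     \<and> (\<forall>e1. b (e1, 0) = 0 \<longrightarrow>
          isCont (\<lambda>p. quasipot b \<sigma> (fst p) (snd p)) ((e1, 0), (e1, 0)))
     \<and> (\<forall>x0 y0 (\<delta>::real) (\<eta>::real). \<delta> > 0 \<longrightarrow> \<eta> > 0 \<longrightarrow>
          (\<forall>x\<in>cball x0 \<delta>. quasipot b \<sigma> x y0 < ennreal \<eta>) \<longrightarrow>
          (\<exists>T0>0. \<forall>x\<in>cball x0 \<delta>. \<exists>Tx\<in>{0<..T0}. \<exists>\<psi>.
              continuous_on {0..Tx} \<psi> \<and> \<psi> 0 = x \<and> \<psi> Tx = y0 \<and>
              action b \<sigma> Tx x \<psi> < ennreal \<eta>))"
proof -
  have b: "continuous_on UNIV b" and \<sigma>: "continuous_on UNIV \<sigma>"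
    using b_lip \<sigma>_lip by (simp_all add: loc_lipschitz_continuous_on)
  note usc = quasipot_upper_semicontinuous[OF b \<sigma> \<sigma>_nz]
  have paths: "\<exists>\<psi>. continuous_on {0..T} \<psi> \<and> \<psi> 0 = x \<and> \<psi> T = y \<and> action b \<sigma> T x \<psi> < \<infinity>"
    if "T > 0" for x y T
    using that action_hermite_path_less_top[OF b \<sigma> \<sigma>_nz, of T x y]
      admissible_continuous_on[OF admissible_hermite_path, of T x y]
    by (intro exI[of _ "hermite_path T x y"]) (simp add: hermite_path_end)
  have equilibrium: "isCont (\<lambda>p. quasipot b \<sigma> (fst p) (snd p)) ((e1, 0), (e1, 0))"
    if "b (e1, 0) = 0" for e1
    using quasipot_equilibrium[of b e1 \<sigma>, OF that] bot_ennreal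
    by (intro upper_semicontinuous_at_bot_imp_isCont[OF usc]) simp
  show ?thesis
    using paths quasipot_less_top[OF b \<sigma> \<sigma>_nz] upper_semicontinuous_at_punctured_SUP[OF usc]
      equilibrium quasipot_less_uniform_time[OF b \<sigma> \<sigma>_nz compact_cball]
    by auto
qed

end
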